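(* Let $\mathcal{X}_1,\mathcal{X}_2$ be non-empty sets, $\mathcal{B}_i\subseteq\mathcal{P}(\mathcal{X}_i)\setminus\{\emptyset\}$ and $\underline{P}_i$ a coherent conditional lower prevision on $\mathcal{C}_i\subseteq\mathcal{C}(\mathcal{X}_i)$ for $i\in\{1,2\}$, and let $\mathcal{C}\subseteq\mathcal{C}(\mathcal{X}_1\times\mathcal{X}_2)$ be an independent domain containing $\mathcal{C}_1$ and $\mathcal{C}_2$. Then the restriction of $\underline{P}_1\otimes\underline{P}_2$ to $\mathcal{C}$ is an independent product of $\underline{P}_1$ and $\underline{P}_2$.
   Context: Gambles on a non-empty set $\mathcal{X}$ are bounded real functions; $\mathcal{G}(\mathcal{X})$ is the set of gambles, $\mathcal{G}_{>0}(\mathcal{X})$ the non-negative non-zero gambles, $\mathbb{I}_A$ the indicator of $A$. For $\mathcal{A}\subseteq\mathcal{G}(\mathcal{X})$: $\mathrm{posi}(\mathcal{A}):=\{\sum_{i=1}^n\lambda_if_i\colon n\in\mathbb{N},\lambda_i>0,f_i\in\mathcal{A}\}$, $\mathcal{E}(\mathcal{A}):=\mathrm{posi}(\mathcal{A}\cup\mathcal{G}_{>0}(\mathcal{X}))$. A coherent set of desirable gambles $\mathcal{D}\subseteq\mathcal{G}(\mathcal{X})$ satisfies: (D1) $f\geq0,f\neq0\Rightarrow f\in\mathcal{D}$; (D2) $f\in\mathcal{D},\lambda>0\Rightarrow\lambda f\in\mathcal{D}$; (D3) $f,g\in\mathcal{D}\Rightarrow f+g\in\mathcal{D}$; (D4)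 $f\leq0\Rightarrow f\notin\mathcal{D}$. $\mathcal{C}(\mathcal{X}):=\mathcal{G}(\mathcal{X})\times(\mathcal{P}(\mathcal{X})\setminus\{\emptyset\})$; a conditional lower prevision on $\mathcal{C}\subseteq\mathcal{C}(\mathcal{X})$ is a map $(f,B)\mapsto\underline{P}(f\vert B)\in\mathbb{R}\cup\{\pm\infty\}$. For $\mathcal{D}\subseteq\mathcal{G}(\mathcal{X})$, $\underline{P}_{\mathcal{D}}(f\vert B):=\sup\{\mu\in\mathbb{R}\colon[f-\mu]\mathbb{I}_B\in\mathcal{D}\}$. $\underline{P}$ is coherent if $\underline{P}=\underline{P}_{\mathcal{D}}$ on its domain for some coherent set of desirable gambles $\mathcal{D}$. For coherent $\underline{P}$ on $\mathcal{C}$, $\mathcal{E}(\underline{P}):=\mathcal{E}(\{[f-\mu]\mathbb{I}_B\colon(f,B)\in\mathcal{C},\mu<\underline{P}(f\vert B)\})$. Gambles/events on $\mathcal{X}_i$ are identified with their cylindrical extensions to $\mathcal{X}_1\times\mathcal{X}_2$ ($B\subseteq\mathcal{X}_1$ with $B\times\mathcal{X}_2$, etc.). For coherent sets of desirable gambles $\mathcal{D}_1,\mathcal{D}_2$: $\mathcal{D}_1\otimes\mathcal{D}_2:=\mathcal{E}(\mathcal{A}_{1\to2}\cup\mathcal{A}_{2\to1})$, $\mathcal{A}_{1\to2}:=\{f_2(X_2)\mathbb{I}_{B_1}(X_1)\colon f_2\in\mathcal{D}_2,B_1\in\mathcal{B}_1\cup\{\mathcal{X}_1\}\}$, $\mathcal{A}_{2\to1}:=\{f_1(X_1)\mathbb{I}_{B_2}(X_2)\colon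 f_1\in\mathcal{D}_1,B_2\in\mathcal{B}_2\cup\{\mathcal{X}_2\}\}$; $(\underline{P}_1\otimes\underline{P}_2)(f\vert B):=\underline{P}_{\mathcal{D}}(f\vert B)$ for $(f,B)\in\mathcal{C}(\mathcal{X}_1\times\mathcal{X}_2)$, $\mathcal{D}=\mathcal{E}(\underline{P}_1)\otimes\mathcal{E}(\underline{P}_2)$. A domain $\mathcal{C}\subseteq\mathcal{C}(\mathcal{X}_1\times\mathcal{X}_2)$ is independent if for all $\{i,j\}=\{1,2\}$, $(f_i,B_i)\in\mathcal{C}(\mathcal{X}_i)$ and $B_j\in\mathcal{B}_j$: $(f_i,B_i)\in\mathcal{C}\iff(f_i,B_i\cap B_j)\in\mathcal{C}$. A coherent $\underline{P}$ on an independent domain $\mathcal{C}$ is epistemically independent if $\underline{P}(f_i\vert B_i)=\underline{P}(f_i\vert B_i\cap B_j)$ for all $\{i,j\}=\{1,2\}$, all $(f_i,B_i)\in\mathcal{C}$ with $f_i,B_i$ on $\mathcal{X}_i$, and all $B_j\in\mathcal{B}_j$. An independent product of $\underline{P}_1,\underline{P}_2$ is an epistemically independent coherent conditional lower prevision on $\mathcal{C}$ that coincides with $\underline{P}_i$ on $\mathcal{C}_i$ for $i=1,2$. *)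

theory Defs
  imports "HOL-Library.Extended_Real" "HOL-Library.Indicator_Function"
begin

text \<open>The possibility spaces X_1, X_2 are represented by (non-empty) types;
  the ambient set X is UNIV of the corresponding type.\<close>

definition gamble :: "('x \<Rightarrow> real) \<Rightarrow> bool" where
  "gamble f \<longleftrightarrow> (\<exists>M. \<forall>x. \<bar>f x\<bar> \<le> M)"

definition gambles :: "('x \<Rightarrow> real) set" where
  "gambles = {f. gamble f}"

definition gambles_pos :: "('x \<Rightarrow> real) set" where
  "gambles_pos = {f. gamble f \<and> (\<forall>x. 0 \<le> f x) \<and> f \<noteq> (\<lambda>x. 0)}"

definition posi :: "('x \<Rightarrow> real) set \<Rightarrow> ('x \<Rightarrow> real) set" where
  "posi A = {g. \<exists>(n::nat) (lam::nat \<Rightarrow> real) (fs::nat \<Rightarrow> 'x \<Rightarrow> real).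
                 0 < n \<and> (\<forall>i<n. 0 < lam i \<and> fs i \<in> A) \<and>
                 g = (\<lambda>x. \<Sum>i<n. lam i * fs i x)}"

definition natext :: "('x \<Rightarrow> real) set \<Rightarrow> ('x \<Rightarrow> real) set" where
  "natext A = posi (A \<union> gambles_pos)"

definition coherent_D :: "('x \<Rightarrow> real) set \<Rightarrow> bool" where
  "coherent_D D \<longleftrightarrow> D \<subseteq> gambles \<and>
     (\<forall>f\<in>gambles. (\<forall>x. 0 \<le> f x) \<and> f \<noteq> (\<lambda>x. 0) \<longrightarrow> f \<in> D) \<and>
     (\<forall>f\<in>D. \<forall>lam::real. 0 < lam \<longrightarrow> (\<lambda>x. lam * f x) \<in> D) \<and>
     (\<forall>f\<in>D. \<forall>g\<in>D. (\<lambda>x. f x + g x) \<in> D) \<and>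
     (\<forall>f\<in>gambles. (\<forall>x. f x \<le> 0) \<longrightarrow> f \<notin> D)"

definition Ccond :: "(('x \<Rightarrow> real) \<times> 'x set) set" where
  "Ccond = {(f, B). gamble f \<and> B \<noteq> {}}"

text \<open>A conditional lower prevision is a map (f,B) \<mapsto> P(f|B) \<in> ereal, considered
  on its domain C.\<close>
type_synonym 'x clp = "('x \<Rightarrow> real) \<Rightarrow> 'x set \<Rightarrow> ereal"

definition cgamble :: "('x \<Rightarrow> real) \<Rightarrow> real \<Rightarrow> 'x set \<Rightarrow> 'x \<Rightarrow> real" where
  "cgamble f \<mu> B = (\<lambda>x. (f x - \<mu>) * indicator B x)"

definition lowprev_D :: "('x \<Rightarrow> real) set \<Rightarrow> 'x clp" where
  "lowprev_D D f B = Sup {ereal \<mu> | \<mu>. cgamble f \<mu> B \<in> D}"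

definition coherent_lp :: "(('x \<Rightarrow> real) \<times> 'x set) set \<Rightarrow> 'x clp \<Rightarrow> bool" where
  "coherent_lp C P \<longleftrightarrow> C \<subseteq> Ccond \<and>
     (\<exists>D. coherent_D D \<and> (\<forall>(f, B)\<in>C. P f B = lowprev_D D f B))"

definition natext_lp :: "(('x \<Rightarrow> real) \<times> 'x set) set \<Rightarrow> 'x clp \<Rightarrow> ('x \<Rightarrow> real) set" where
  "natext_lp C P = natext {cgamble f \<mu> B | f \<mu> B. (f, B) \<in> C \<and> ereal \<mu> < P f B}"

definition cyl1 :: "('a \<Rightarrow> real) \<Rightarrow> ('a \<times> 'b \<Rightarrow> real)" where
  "cyl1 f = (\<lambda>(x1, x2). f x1)"

definition cyl2 :: "('b \<Rightarrow> real) \<Rightarrow> ('a \<times> 'b \<Rightarrow> real)" where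
  "cyl2 f = (\<lambda>(x1, x2). f x2)"

definition cylset1 :: "'a set \<Rightarrow> ('a \<times> 'b) set" where
  "cylset1 B = B \<times> UNIV"

definition cylset2 :: "'b set \<Rightarrow> ('a \<times> 'b) set" where
  "cylset2 B = UNIV \<times> B"

definition prod_D :: "'a set set \<Rightarrow> 'b set set \<Rightarrow> ('a \<Rightarrow> real) set \<Rightarrow> ('b \<Rightarrow> real) set
    \<Rightarrow> ('a \<times> 'b \<Rightarrow> real) set" where
  "prod_D Bs1 Bs2 D1 D2 =
     natext ({(\<lambda>x. cyl2 f2 x * indicator (cylset1 B1) x) | f2 B1. f2 \<in> D2 \<and> B1 \<in> Bs1 \<union> {UNIV}}
           \<union> {(\<lambda>x. cyl1 f1 x * indicator (cylset2 B2) x) | f1 B2. f1 \<in> D1 \<and> B2 \<in> Bs2 \<union> {UNIV}})"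

definition prod_lp :: "'a set set \<Rightarrow> 'b set set \<Rightarrow> (('a \<Rightarrow> real) \<times> 'a set) set \<Rightarrow> 'a clp
    \<Rightarrow> (('b \<Rightarrow> real) \<times> 'b set) set \<Rightarrow> 'b clp \<Rightarrow> ('a \<times> 'b) clp" where
  "prod_lp Bs1 Bs2 C1 P1 C2 P2 =
     lowprev_D (prod_D Bs1 Bs2 (natext_lp C1 P1) (natext_lp C2 P2))"

definition independent_domain :: "'a set set \<Rightarrow> 'b set set
    \<Rightarrow> ((('a \<times> 'b) \<Rightarrow> real) \<times> ('a \<times> 'b) set) set \<Rightarrow> bool" where
  "independent_domain Bs1 Bs2 C \<longleftrightarrow>
     (\<forall>(f1, B1)\<in>Ccond. \<forall>B2\<in>Bs2.
        (cyl1 f1, cylset1 B1) \<in> C \<longleftrightarrow> (cyl1 f1, cylset1 B1 \<inter> cylset2 B2) \<in> C) \<and>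
     (\<forall>(f2, B2)\<in>Ccond. \<forall>B1\<in>Bs1.
        (cyl2 f2, cylset2 B2) \<in> C \<longleftrightarrow> (cyl2 f2, cylset2 B2 \<inter> cylset1 B1) \<in> C)"

definition epistemically_independent :: "'a set set \<Rightarrow> 'b set set
    \<Rightarrow> ((('a \<times> 'b) \<Rightarrow> real) \<times> ('a \<times> 'b) set) set \<Rightarrow> ('a \<times> 'b) clp \<Rightarrow> bool" where
  "epistemically_independent Bs1 Bs2 C P \<longleftrightarrow>
     independent_domain Bs1 Bs2 C \<and> coherent_lp C P \<and>
     (\<forall>(f1, B1)\<in>Ccond. (cyl1 f1, cylset1 B1) \<in> C \<longrightarrow> (\<forall>B2\<in>Bs2.
        P (cyl1 f1) (cylset1 B1) = P (cyl1 f1) (cylset1 B1 \<inter> cylset2 B2))) \<and>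
     (\<forall>(f2, B2)\<in>Ccond. (cyl2 f2, cylset2 B2) \<in> C \<longrightarrow> (\<forall>B1\<in>Bs1.
        P (cyl2 f2) (cylset2 B2) = P (cyl2 f2) (cylset2 B2 \<inter> cylset1 B1)))"

definition independent_product :: "'a set set \<Rightarrow> 'b set set
    \<Rightarrow> (('a \<Rightarrow> real) \<times> 'a set) set \<Rightarrow> 'a clp \<Rightarrow> (('b \<Rightarrow> real) \<times> 'b set) set \<Rightarrow> 'b clp
    \<Rightarrow> ((('a \<times> 'b) \<Rightarrow> real) \<times> ('a \<times> 'b) set) set \<Rightarrow> ('a \<times> 'b) clp \<Rightarrow> bool" where
  "independent_product Bs1 Bs2 C1 P1 C2 P2 C P \<longleftrightarrow>
     epistemically_independent Bs1 Bs2 C P \<and>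
     (\<forall>(f, B)\<in>C1. P (cyl1 f) (cylset1 B) = P1 f B) \<and>
     (\<forall>(f, B)\<in>C2. P (cyl2 f) (cylset2 B) = P2 f B)"

end

theory Submission
  imports Defs
begin

text \<open>The product of coherent sets of desirable gambles \<open>D1\<close> and \<open>D2\<close> is generated by the
  gambles \<open>g(x1) I_B(x2)\<close> with \<open>g \<in> D1\<close> and \<open>f(x2) I_A(x1)\<close> with \<open>f \<in> D2\<close>. Read as a function
  of \<open>x1\<close>, each of its elements is a sum of terms \<open>g_j(x1) I_{B_j}(x2)\<close> with \<open>g_j \<in> D1\<close>, plus a
  term whose \<open>x1\<close>-sections lie in \<open>D2\<close> or vanish. If such a gamble is dominated by \<open>f(x1) I_B(x2)\<close>,
  a finite-dimensional separation argument for the finitely many events \<open>B_j\<close> and \<open>B\<close> gives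
  non-negative weights that combine the \<open>g_j\<close> into an element of \<open>D1\<close> below a multiple of \<open>f\<close>.
  Hence the product is coherent, and \<open>f(x1) I_B(x2)\<close> belongs to it exactly when \<open>f \<in> D1\<close>, for
  every conditioning event \<open>B\<close> of the other variable (and symmetrically). So the induced lower
  previsions extend \<open>P1\<close> and \<open>P2\<close> and are unaffected by conditioning on events of the other
  variable, which is epistemic independence.\<close>

lemma gamble_add: "gamble f \<Longrightarrow> gamble g \<Longrightarrow> gamble (\<lambda>x. f x + g x)"
proof -
  assume "gamble f" "gamble g"
  then obtain M1 M2 where "\<forall>x. \<bar>f x\<bar> \<le> M1" "\<forall>x. \<bar>g x\<bar> \<le> M2"
    unfolding gamble_def by blast
  then have "\<forall>x. \<bar>f x + g x\<bar> \<le> M1 + M2"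
    by (metis abs_triangle_ineq add_mono order_trans)
  then show ?thesis unfolding gamble_def by blast
qed

lemma gamble_scale: "gamble f \<Longrightarrow> gamble (\<lambda>x. c * f x)"
proof -
  assume "gamble f"
  then obtain M where "\<forall>x. \<bar>f x\<bar> \<le> M" unfolding gamble_def by blast
  then have "\<forall>x. \<bar>c * f x\<bar> \<le> \<bar>c\<bar> * M" by (simp add: abs_mult mult_left_mono)
  then show ?thesis unfolding gamble_def by blast
qed

lemma gamble_diff: "gamble f \<Longrightarrow> gamble g \<Longrightarrow> gamble (\<lambda>x. f x - g x)"
  using gamble_add[OF _ gamble_scale, of f g "-1"] by simp

lemma gamble_const: "gamble (\<lambda>x. c)"
  unfolding gamble_def by blast

lemma gamble_mult_indicator: "gamble f \<Longrightarrow> gamble (\<lambda>x. f x * indicator B x)"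
proof -
  assume "gamble f"
  then obtain M where "\<forall>x. \<bar>f x\<bar> \<le> M" unfolding gamble_def by blast
  then have "\<forall>x. \<bar>f x * indicator B x\<bar> \<le> M" by (auto simp: indicator_def)
  then show ?thesis unfolding gamble_def by blast
qed

lemma gamble_sum: "finite I \<Longrightarrow> (\<And>i. i \<in> I \<Longrightarrow> gamble (F i)) \<Longrightarrow> gamble (\<lambda>x. \<Sum>i\<in>I. F i x)"
  by (induction I rule: finite_induct) (simp_all add: gamble_const gamble_add)

lemma gamble_indicator_combination:
  "finite I \<Longrightarrow> gamble (\<lambda>x. - (\<Sum>j\<in>I. v j * indicator (B j) x))"
  by (intro gamble_diff[of "\<lambda>_. 0", simplified] gamble_sum gamble_mult_indicator gamble_const)

lemma gamble_section: "gamble h \<Longrightarrow> gamble (\<lambda>y. h (x, y))"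
  unfolding gamble_def by blast

lemma gamble_cyl1: "gamble f \<Longrightarrow> gamble (cyl1 f)"
  unfolding gamble_def cyl1_def by auto

lemma gamble_cyl2: "gamble f \<Longrightarrow> gamble (cyl2 f)"
  unfolding gamble_def cyl2_def by auto

lemma gamble_cgamble: "gamble f \<Longrightarrow> gamble (cgamble f \<mu> B)"
  unfolding cgamble_def by (intro gamble_mult_indicator gamble_diff gamble_const)

lemma posiI:
  "0 < (n::nat) \<Longrightarrow> (\<And>i. i < n \<Longrightarrow> 0 < (lam i::real) \<and> fs i \<in> A)
   \<Longrightarrow> g = (\<lambda>x. \<Sum>i<n. lam i * fs i x) \<Longrightarrow> g \<in> posi A"
  unfolding posi_def by blast

lemma posi_base: "f \<in> A \<Longrightarrow> f \<in> posi A"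
  by (rule posiI[of 1 "\<lambda>_. 1" "\<lambda>_. f"]) auto

lemma posi_scale: "f \<in> posi A \<Longrightarrow> 0 < c \<Longrightarrow> (\<lambda>x. c * f x) \<in> posi A"
proof -
  assume "f \<in> posi A" "0 < c"
  then obtain n :: nat and lam :: "nat \<Rightarrow> real" and fs
    where f: "0 < n" "\<And>i. i < n \<Longrightarrow> 0 < lam i \<and> fs i \<in> A" "f = (\<lambda>x. \<Sum>i<n. lam i * fs i x)"
    unfolding posi_def by blast
  show ?thesis
    by (rule posiI[of n "\<lambda>i. c * lam i" fs])
      (use f \<open>0 < c\<close> in \<open>auto simp: sum_distrib_left mult.assoc\<close>)
qed

lemma posi_add: "f \<in> posi A \<Longrightarrow> g \<in> posi A \<Longrightarrow> (\<lambda>x. f x + g x) \<in> posi A"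
proof -
  assume "f \<in> posi A" "g \<in> posi A"
  obtain n :: nat and lam :: "nat \<Rightarrow> real" and fs
    where f: "0 < n" "\<And>i. i < n \<Longrightarrow> 0 < lam i \<and> fs i \<in> A" "f = (\<lambda>x. \<Sum>i<n. lam i * fs i x)"
    using \<open>f \<in> posi A\<close> unfolding posi_def by blast
  obtain m :: nat and mu :: "nat \<Rightarrow> real" and gs
    where g: "\<And>i. i < m \<Longrightarrow> 0 < mu i \<and> gs i \<in> A" "g = (\<lambda>x. \<Sum>i<m. mu i * gs i x)"
    using \<open>g \<in> posi A\<close> unfolding posi_def by blast
  define la where "la i = (if i < n then lam i else mu (i - n))" for i
  define hs where "hs i = (if i < n then fs i else gs (i - n))" for i
  have "(\<Sum>i<n + m. la i * hs i x) = (\<Sum>i<n. la i * hs i x) + (\<Sum>i<m. la (n + i) * hs (n + i) x)" for x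
    by (induction m) (simp_all add: ac_simps)
  then show ?thesis
    by (intro posiI[of "n + m" la hs]) (use f g in \<open>auto simp: la_def hs_def\<close>)
qed

lemma posi_induct [consumes 1, case_names base scale add]:
  assumes "h \<in> posi A"
    and base: "\<And>f. f \<in> A \<Longrightarrow> Q f"
    and scale: "\<And>f c. Q f \<Longrightarrow> 0 < c \<Longrightarrow> Q (\<lambda>x. c * f x)"
    and add: "\<And>f g. Q f \<Longrightarrow> Q g \<Longrightarrow> Q (\<lambda>x. f x + g x)"
  shows "Q h"
proof -
  obtain n :: nat and lam :: "nat \<Rightarrow> real" and fs
    where h: "0 < n" "\<And>i. i < n \<Longrightarrow> 0 < lam i \<and> fs i \<in> A" "h = (\<lambda>x. \<Sum>i<n. lam i * fs i x)"
    using assms(1) unfolding posi_def by blast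
  have "Q (\<lambda>x. \<Sum>i<Suc k. lam i * fs i x)" if "k < n" for k
    using that
  proof (induction k)
    case 0
    then show ?case using h(2) base scale by simp
  next
    case (Suc k)
    then show ?case using h(2)[of "Suc k"] base scale add[of "\<lambda>x. \<Sum>i<Suc k. lam i * fs i x"] by simp
  qed
  from this[of "n - 1"] show ?thesis using h(1,3) by simp
qed

section \<open>A finite-dimensional separation theorem\<close>

text \<open>The one-dimensional step of the separation theorem below.\<close>

lemma separating_coefficient_exists:
  fixes p s :: "'v \<Rightarrow> real"
  assumes u0: "u0 \<in> N" "0 < p u0"
    and nonneg: "\<And>u. u \<in> N \<Longrightarrow> 0 \<le> p u \<Longrightarrow> s u \<le> 0"
    and mixed: "\<And>u v. u \<in> N \<Longrightarrow> v \<in> N \<Longrightarrow> 0 < p u \<Longrightarrow> p v < 0 \<Longrightarrow> p u * s v - p v * s u \<le> 0"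
  shows "\<exists>a\<ge>0. \<forall>u\<in>N. a * p u + s u \<le> 0"
proof -
  define L where "L = insert 0 {s v / - p v | v. v \<in> N \<and> p v < 0}"
  have L_le: "y \<le> - s u / p u" if "y \<in> L" "u \<in> N" "0 < p u" for y u
  proof -
    have "0 \<le> - s u / p u" using nonneg[of u] that(2,3) by (simp add: divide_nonpos_pos)
    moreover have "s v / - p v \<le> - s u / p u" if "v \<in> N" "p v < 0" for v
      using mixed[of u v] \<open>u \<in> N\<close> \<open>0 < p u\<close> that by (simp add: field_simps)
    ultimately show ?thesis using \<open>y \<in> L\<close> unfolding L_def by blast
  qed
  have bdd: "bdd_above L" using L_le[OF _ u0] by (rule bdd_aboveI)
  define a where "a = Sup L"
  have "0 \<le> a" unfolding a_def using bdd by (intro cSup_upper) (simp_all add: L_def)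
  moreover have "a * p u + s u \<le> 0" if "u \<in> N" for u
  proof (cases "0 < p u")
    case True
    have "a \<le> - s u / p u" unfolding a_def using L_le[OF _ that True]
      by (intro cSup_least) (simp_all add: L_def)
    then show ?thesis using True by (simp add: field_simps)
  next
    case False
    show ?thesis
    proof (cases "p u = 0")
      case True then show ?thesis using nonneg[OF that] by simp
    next
      case False
      with \<open>\<not> 0 < p u\<close> have "p u < 0" by simp
      then have "s u / - p u \<le> a" unfolding a_def using bdd that
        by (intro cSup_upper) (auto simp: L_def)
      then show ?thesis using \<open>p u < 0\<close> by (simp add: field_simps)
    qed
  qed
  ultimately show ?thesis by blast
qed

definition lower_cone :: "('i \<Rightarrow> real) set \<Rightarrow> 'i set \<Rightarrow> bool" where
  "lower_cone N I \<longleftrightarrow>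
     (\<forall>u\<in>N. \<forall>v\<in>N. (\<lambda>i. u i + v i) \<in> N) \<and>
     (\<forall>u\<in>N. \<forall>c>0. (\<lambda>i. c * u i) \<in> N) \<and>
     (\<forall>u\<in>N. \<forall>v. (\<forall>i\<in>I. v i \<le> u i) \<longrightarrow> v \<in> N) \<and>
     (\<forall>u\<in>N. (\<forall>i\<in>I. 0 \<le> u i) \<longrightarrow> (\<forall>i\<in>I. u i = 0))"

lemma lower_coneI:
  assumes "\<And>u v. u \<in> N \<Longrightarrow> v \<in> N \<Longrightarrow> (\<lambda>i. u i + v i) \<in> N"
    and "\<And>u c. u \<in> N \<Longrightarrow> 0 < c \<Longrightarrow> (\<lambda>i. c * u i) \<in> N"
    and "\<And>u v. u \<in> N \<Longrightarrow> (\<And>i. i \<in> I \<Longrightarrow> v i \<le> u i) \<Longrightarrow> v \<in> N"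
    and "\<And>u i. u \<in> N \<Longrightarrow> (\<And>i. i \<in> I \<Longrightarrow> 0 \<le> u i) \<Longrightarrow> i \<in> I \<Longrightarrow> u i = 0"
  shows "lower_cone N I"
  unfolding lower_cone_def using assms by blast

lemma
  assumes "lower_cone N I"
  shows lower_cone_add: "u \<in> N \<Longrightarrow> v \<in> N \<Longrightarrow> (\<lambda>i. u i + v i) \<in> N"
    and lower_cone_scale: "u \<in> N \<Longrightarrow> 0 < c \<Longrightarrow> (\<lambda>i. c * u i) \<in> N"
    and lower_cone_downward: "u \<in> N \<Longrightarrow> (\<And>i. i \<in> I \<Longrightarrow> v i \<le> u i) \<Longrightarrow> v \<in> N"
    and lower_cone_nonneg: "u \<in> N \<Longrightarrow> (\<And>i. i \<in> I \<Longrightarrow> 0 \<le> u i) \<Longrightarrow> i \<in> I \<Longrightarrow> u i = 0"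
  using assms unfolding lower_cone_def by blast+

lemma lower_cone_drop_coordinate:
  assumes N: "lower_cone N (insert x I)" and "x \<notin> I"
  shows "lower_cone {u. u(x := 0) \<in> N} I"
proof (rule lower_coneI)
  fix u v assume "u \<in> {u. u(x := 0) \<in> N}" "v \<in> {u. u(x := 0) \<in> N}"
  then have "(\<lambda>i. (u(x := 0)) i + (v(x := 0)) i) \<in> N" using lower_cone_add[OF N] by blast
  moreover have "(\<lambda>i. (u(x := 0)) i + (v(x := 0)) i) = (\<lambda>i. u i + v i)(x := 0)" by auto
  ultimately show "(\<lambda>i. u i + v i) \<in> {u. u(x := 0) \<in> N}" by simp
next
  fix u and c :: real assume "u \<in> {u. u(x := 0) \<in> N}" "0 < c"
  then have "(\<lambda>i. c * (u(x := 0)) i) \<in> N" using lower_cone_scale[OF N] by blast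
  moreover have "(\<lambda>i. c * (u(x := 0)) i) = (\<lambda>i. c * u i)(x := 0)" by auto
  ultimately show "(\<lambda>i. c * u i) \<in> {u. u(x := 0) \<in> N}" by simp
next
  fix u v assume "u \<in> {u. u(x := 0) \<in> N}" "\<And>i. i \<in> I \<Longrightarrow> v i \<le> u i"
  then show "v \<in> {u. u(x := 0) \<in> N}"
    by (auto intro: lower_cone_downward[OF N, of "u(x := 0)"])
next
  fix u i assume "u \<in> {u. u(x := 0) \<in> N}" "\<And>i. i \<in> I \<Longrightarrow> 0 \<le> u i" "i \<in> I"
  then have "(u(x := 0)) i = 0" by (intro lower_cone_nonneg[OF N, of "u(x := 0)"]) auto
  then show "u i = 0" using \<open>i \<in> I\<close> \<open>x \<notin> I\<close> by (metis fun_upd_other)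
qed

lemma lower_cone_extend_weights:
  assumes N: "lower_cone N (insert x I)" and "x \<notin> I" and u0: "u0 \<in> N" "0 < u0 x"
    and \<alpha>: "\<forall>u\<in>{u. u(x := 0) \<in> N}. (\<Sum>i\<in>I. \<alpha> i * u i) \<le> 0"
  shows "\<exists>a\<ge>0. \<forall>u\<in>N. a * u x + (\<Sum>i\<in>I. \<alpha> i * u i) \<le> 0"
proof -
  define S where "S u = (\<Sum>i\<in>I. \<alpha> i * u i)" for u :: "'a \<Rightarrow> real"
  have S_nonpos: "S u \<le> 0" if "u \<in> N" "0 \<le> u x" for u
  proof -
    have "u(x := 0) \<in> N" using that by (intro lower_cone_downward[OF N \<open>u \<in> N\<close>]) auto
    then have "u(x := 0) \<in> {u. u(x := 0) \<in> N}" by simp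
    then have "S (u(x := 0)) \<le> 0" using \<alpha> unfolding S_def by blast
    moreover have "S (u(x := 0)) = S u" unfolding S_def using \<open>x \<notin> I\<close> by (intro sum.cong) auto
    ultimately show ?thesis by simp
  qed
  have "u x * S v - v x * S u \<le> 0" if "u \<in> N" "v \<in> N" "0 < u x" "v x < 0" for u v
  proof -
    define w where "w = (\<lambda>i. u x * v i + (- v x) * u i)"
    have "w \<in> N" unfolding w_def using that
      by (intro lower_cone_add[OF N] lower_cone_scale[OF N]) auto
    have "S w = (\<Sum>i\<in>I. u x * (\<alpha> i * v i) - v x * (\<alpha> i * u i))"
      unfolding S_def w_def by (intro sum.cong) (simp_all add: algebra_simps)
    also have "\<dots> = u x * S v - v x * S u"
      unfolding S_def by (simp add: sum_subtractf sum_distrib_left)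
    finally show ?thesis using S_nonpos[of w] \<open>w \<in> N\<close> by (simp add: w_def)
  qed
  then show ?thesis
    using separating_coefficient_exists[of u0 N "\<lambda>u. u x" S] u0 S_nonpos unfolding S_def by blast
qed

text \<open>The separating weights are built by adding one coordinate at a time.\<close>

lemma lower_cone_separation:
  assumes "finite I" "I \<noteq> {}" "lower_cone N I"
  shows "\<exists>\<alpha>. (\<forall>i\<in>I. 0 \<le> \<alpha> i) \<and> (\<exists>i\<in>I. 0 < \<alpha> i) \<and> (\<forall>u\<in>N. (\<Sum>i\<in>I. \<alpha> i * u i) \<le> 0)"
  using assms
proof (induction I arbitrary: N rule: finite_ne_induct)
  case (singleton x)
  have "u x \<le> 0" if "u \<in> N" for u
  proof (rule ccontr)
    assume "\<not> u x \<le> 0"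
    then have "u x = 0" using lower_cone_nonneg[OF singleton.prems that] by force
    with \<open>\<not> u x \<le> 0\<close> show False by simp
  qed
  then show ?case by (intro exI[of _ "\<lambda>_. 1"]) simp
next
  case (insert x I)
  have N: "lower_cone N (insert x I)" by fact
  show ?case
  proof (cases "\<forall>u\<in>N. u x \<le> 0")
    case True
    have "(\<Sum>i\<in>insert x I. (if i = x then 1 else 0) * u i) = u x" for u :: "'a \<Rightarrow> real"
      using insert.hyps by (simp add: if_distrib[of "\<lambda>c. c * _"] sum.delta cong: if_cong)
    with True show ?thesis by (intro exI[of _ "\<lambda>i. if i = x then 1 else 0"]) auto
  next
    case False
    then obtain u0 where u0: "u0 \<in> N" "0 < u0 x" by force
    obtain \<alpha> where \<alpha>: "\<forall>i\<in>I. 0 \<le> \<alpha> i" "\<exists>i\<in>I. 0 < \<alpha> i"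
      "\<forall>u\<in>{u. u(x := 0) \<in> N}. (\<Sum>i\<in>I. \<alpha> i * u i) \<le> 0"
      using insert.IH[OF lower_cone_drop_coordinate[OF N insert.hyps(3)]] by blast
    obtain a where a: "0 \<le> a" "\<forall>u\<in>N. a * u x + (\<Sum>i\<in>I. \<alpha> i * u i) \<le> 0"
      using lower_cone_extend_weights[OF N insert.hyps(3) u0 \<alpha>(3)] by blast
    have "(\<Sum>i\<in>insert x I. (\<alpha>(x := a)) i * u i) = a * u x + (\<Sum>i\<in>I. \<alpha> i * u i)" for u
      using insert.hyps by (simp add: sum.insert) (intro sum.cong, auto)
    moreover have "\<exists>i\<in>insert x I. 0 < (\<alpha>(x := a)) i" using \<alpha>(2) insert.hyps(3) by force
    ultimately show ?thesis using \<alpha>(1) a by (intro exI[of _ "\<alpha>(x := a)"]) auto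
  qed
qed

section \<open>Coherent sets of desirable gambles\<close>

context
  fixes D :: "('x \<Rightarrow> real) set"
  assumes D: "coherent_D D"
begin

lemma coherent_D_gamble: "f \<in> D \<Longrightarrow> gamble f"
  using D unfolding coherent_D_def gambles_def by auto

lemma coherent_D_pos: "gamble f \<Longrightarrow> (\<And>x. 0 \<le> f x) \<Longrightarrow> f \<noteq> (\<lambda>x. 0) \<Longrightarrow> f \<in> D"
  using D unfolding coherent_D_def gambles_def by simp

lemma coherent_D_scale: "f \<in> D \<Longrightarrow> 0 < c \<Longrightarrow> (\<lambda>x. c * f x) \<in> D"
  using D unfolding coherent_D_def by simp

lemma coherent_D_add: "f \<in> D \<Longrightarrow> g \<in> D \<Longrightarrow> (\<lambda>x. f x + g x) \<in> D"
  using D unfolding coherent_D_def by simp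

lemma coherent_D_nonpos: "f \<in> D \<Longrightarrow> (\<And>x. f x \<le> 0) \<Longrightarrow> False"
proof -
  assume "f \<in> D" "\<And>x. f x \<le> 0"
  moreover from \<open>f \<in> D\<close> have "f \<in> gambles" unfolding gambles_def by (simp add: coherent_D_gamble)
  ultimately show False using D unfolding coherent_D_def by blast
qed

lemma coherent_D_mono:
  assumes "f \<in> D" "gamble g" "\<And>x. f x \<le> g x"
  shows "g \<in> D"
proof (cases "g = f")
  case False
  then have "(\<lambda>x. g x - f x) \<noteq> (\<lambda>x. 0)" by (auto simp: fun_eq_iff)
  moreover have "gamble (\<lambda>x. g x - f x)"
    using assms by (simp add: gamble_diff coherent_D_gamble)
  ultimately have "(\<lambda>x. g x - f x) \<in> D"
    using assms(3) by (simp add: coherent_D_pos)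
  from coherent_D_add[OF \<open>f \<in> D\<close> this] show ?thesis by simp
qed (use assms in simp)

lemma coherent_D_sum:
  assumes "finite I" "\<And>i. i \<in> I \<Longrightarrow> 0 \<le> \<alpha> i \<and> f i \<in> D" "\<exists>i\<in>I. 0 < \<alpha> i"
  shows "(\<lambda>x. \<Sum>i\<in>I. \<alpha> i * f i x) \<in> D"
  using assms
proof (induction I rule: finite_induct)
  case (insert a I)
  have sum: "(\<lambda>x. \<Sum>i\<in>insert a I. \<alpha> i * f i x) = (\<lambda>x. \<alpha> a * f a x + (\<Sum>i\<in>I. \<alpha> i * f i x))"
    using insert.hyps by simp
  have a: "0 \<le> \<alpha> a" "f a \<in> D" using insert.prems(1) by simp_all
  show ?case
  proof (cases "\<exists>i\<in>I. 0 < \<alpha> i")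
    case True
    then have IH: "(\<lambda>x. \<Sum>i\<in>I. \<alpha> i * f i x) \<in> D" using insert.IH insert.prems(1) by simp
    show ?thesis
    proof (cases "\<alpha> a = 0")
      case False
      with a have "(\<lambda>x. \<alpha> a * f a x) \<in> D" by (simp add: coherent_D_scale)
      from coherent_D_add[OF this IH] show ?thesis unfolding sum .
    qed (use IH in \<open>simp add: sum\<close>)
  next
    case False
    then have "\<alpha> i = 0" if "i \<in> I" for i using insert.prems(1) that by force
    moreover have "0 < \<alpha> a" using False insert.prems(2) by auto
    ultimately show ?thesis unfolding sum using a by (simp add: coherent_D_scale)
  qed
qed simp

lemma coherent_D_insert_zero_mono:
  assumes f: "f \<in> insert (\<lambda>_. 0) D" and "gamble g" and le: "\<And>x. f x \<le> g x"
  shows "g \<in> insert (\<lambda>_. 0) D"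
proof (cases "f = (\<lambda>_. 0)")
  case True
  with le have "0 \<le> g x" for x by simp
  with \<open>gamble g\<close> show ?thesis using coherent_D_pos by blast
next
  case False
  with f have "f \<in> D" by simp
  with \<open>gamble g\<close> le show ?thesis by (blast intro: coherent_D_mono)
qed

lemma coherent_D_insert_zero_add:
  "f \<in> insert (\<lambda>_. 0) D \<Longrightarrow> g \<in> insert (\<lambda>_. 0) D \<Longrightarrow> (\<lambda>x. f x + g x) \<in> insert (\<lambda>_. 0) D"
  using coherent_D_add by auto

lemma coherent_D_insert_zero_scale:
  "f \<in> insert (\<lambda>_. 0) D \<Longrightarrow> 0 < c \<Longrightarrow> (\<lambda>x. c * f x) \<in> insert (\<lambda>_. 0) D"
  using coherent_D_scale by auto

lemma coherent_D_add_insert_zero: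
  "f \<in> D \<Longrightarrow> g \<in> insert (\<lambda>_. 0) D \<Longrightarrow> (\<lambda>x. f x + g x) \<in> D"
  using coherent_D_add by auto

lemma coherent_D_insert_zero_nonpos:
  "f \<in> insert (\<lambda>_. 0) D \<Longrightarrow> (\<And>x. f x \<le> 0) \<Longrightarrow> f = (\<lambda>_. 0)"
  using coherent_D_nonpos by (cases "f = (\<lambda>_. 0)") auto

text \<open>The weights \<open>\<alpha>\<close> act like an unnormalised expectation on combinations of the indicators
  of the sets \<open>B i\<close> that is compatible with \<open>D\<close>.\<close>

lemma indicator_weights_exist:
  fixes B :: "'i \<Rightarrow> 'x set"
  assumes "finite I" "I \<noteq> {}" "\<And>i. i \<in> I \<Longrightarrow> B i \<noteq> {}"
  shows "\<exists>\<alpha>. (\<forall>i\<in>I. 0 \<le> \<alpha> i) \<and> (\<exists>i\<in>I. 0 < \<alpha> i) \<and>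
    (\<forall>v. (\<lambda>x. - (\<Sum>j\<in>I. v j * indicator (B j) x)) \<in> insert (\<lambda>_. 0) D \<longrightarrow> (\<Sum>i\<in>I. \<alpha> i * v i) \<le> 0)"
proof -
  define F where "F v = (\<lambda>x. - (\<Sum>j\<in>I. v j * indicator (B j) x))" for v :: "'i \<Rightarrow> real"
  have F_gamble: "gamble (F v)" for v
    unfolding F_def using \<open>finite I\<close> by (rule gamble_indicator_combination)
  have "lower_cone {v. F v \<in> insert (\<lambda>_. 0) D} I"
  proof (rule lower_coneI)
    fix u v assume "u \<in> {v. F v \<in> insert (\<lambda>_. 0) D}" "v \<in> {v. F v \<in> insert (\<lambda>_. 0) D}"
    moreover have "F (\<lambda>i. u i + v i) = (\<lambda>x. F u x + F v x)"
      unfolding F_def by (simp add: distrib_right sum.distrib)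
    ultimately show "(\<lambda>i. u i + v i) \<in> {v. F v \<in> insert (\<lambda>_. 0) D}"
      using coherent_D_insert_zero_add[of "F u" "F v"] by simp
  next
    fix u and c :: real assume "u \<in> {v. F v \<in> insert (\<lambda>_. 0) D}" "0 < c"
    moreover have "F (\<lambda>i. c * u i) = (\<lambda>x. c * F u x)"
      unfolding F_def by (simp add: sum_distrib_left mult.assoc)
    ultimately show "(\<lambda>i. c * u i) \<in> {v. F v \<in> insert (\<lambda>_. 0) D}"
      using coherent_D_insert_zero_scale[of "F u" c] by simp
  next
    fix u v assume "u \<in> {v. F v \<in> insert (\<lambda>_. 0) D}" and le: "\<And>i. i \<in> I \<Longrightarrow> v i \<le> u i"
    moreover have "F u x \<le> F v x" for x
      unfolding F_def using le by (simp add: sum_mono mult_right_mono)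
    ultimately show "v \<in> {v. F v \<in> insert (\<lambda>_. 0) D}"
      using coherent_D_insert_zero_mono F_gamble by blast
  next
    fix u i assume u: "u \<in> {v. F v \<in> insert (\<lambda>_. 0) D}" and nonneg: "\<And>i. i \<in> I \<Longrightarrow> 0 \<le> u i"
      and "i \<in> I"
    have "F u x \<le> 0" for x
      unfolding F_def using nonneg by (simp add: sum_nonneg)
    then have F_zero: "F u = (\<lambda>_. 0)" using u coherent_D_insert_zero_nonpos by blast
    obtain x where "x \<in> B i" using assms(3) \<open>i \<in> I\<close> by blast
    then have "u i = u i * indicator (B i) x" by simp
    also have "\<dots> \<le> (\<Sum>j\<in>I. u j * indicator (B j) x)"
      using \<open>finite I\<close> \<open>i \<in> I\<close> nonneg by (intro member_le_sum) auto
    finally have "u i \<le> (\<Sum>j\<in>I. u j * indicator (B j) x)" .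
    then show "u i = 0" using F_zero nonneg[OF \<open>i \<in> I\<close>] unfolding F_def by (simp add: fun_eq_iff)
  qed
  from lower_cone_separation[OF assms(1,2) this] show ?thesis unfolding F_def by auto
qed

end

lemma natext_least:
  assumes D: "coherent_D D" and "A \<subseteq> D"
  shows "natext A \<subseteq> D"
proof
  fix h assume "h \<in> natext A"
  then show "h \<in> D" unfolding natext_def
  proof (induction rule: posi_induct)
    case (base f)
    then show ?case using \<open>A \<subseteq> D\<close> coherent_D_pos[OF D] unfolding gambles_pos_def by auto
  next
    case (scale f c)
    then show ?case by (rule coherent_D_scale[OF D])
  next
    case (add f g)
    then show ?case by (rule coherent_D_add[OF D])
  qed
qed

lemma coherent_natextI:
  assumes "natext A \<subseteq> gambles" and nonpos: "\<And>f. f \<in> natext A \<Longrightarrow> (\<And>x. f x \<le> 0) \<Longrightarrow> False"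
  shows "coherent_D (natext A)"
  unfolding coherent_D_def
proof (intro conjI ballI allI impI)
  fix f :: "'a \<Rightarrow> real" assume "f \<in> gambles" "(\<forall>x. 0 \<le> f x) \<and> f \<noteq> (\<lambda>x. 0)"
  then have "f \<in> gambles_pos" unfolding gambles_def gambles_pos_def by simp
  then show "f \<in> natext A" unfolding natext_def by (intro posi_base) simp
next
  fix f and c :: real assume "f \<in> natext A" "0 < c"
  then show "(\<lambda>x. c * f x) \<in> natext A" unfolding natext_def by (rule posi_scale)
next
  fix f g assume "f \<in> natext A" "g \<in> natext A"
  then show "(\<lambda>x. f x + g x) \<in> natext A" unfolding natext_def by (rule posi_add)
next
  fix f :: "'a \<Rightarrow> real" assume "\<forall>x. f x \<le> 0"
  then show "f \<notin> natext A" using nonpos by blast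
qed (fact assms(1))

lemma coherent_natext:
  assumes D: "coherent_D D" and "A \<subseteq> D"
  shows "coherent_D (natext A)"
proof (rule coherent_natextI)
  show "natext A \<subseteq> gambles"
    using natext_least[OF assms] coherent_D_gamble[OF D] unfolding gambles_def by blast
  fix f assume "f \<in> natext A" "\<And>x. f x \<le> 0"
  then show False using natext_least[OF assms] coherent_D_nonpos[OF D] by blast
qed

lemma lowprev_D_mono: "D \<subseteq> D' \<Longrightarrow> lowprev_D D f B \<le> lowprev_D D' f B"
  unfolding lowprev_D_def by (intro Sup_subset_mono) auto

lemma cgamble_mem_if_less_lowprev_D:
  assumes D: "coherent_D D" and "gamble f" and "ereal \<mu> < lowprev_D D f B"
  shows "cgamble f \<mu> B \<in> D"
proof -
  obtain \<mu>' where "cgamble f \<mu>' B \<in> D" "\<mu> < \<mu>'"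
    using assms(3) unfolding lowprev_D_def less_Sup_iff by auto
  moreover have "cgamble f \<mu>' B x \<le> cgamble f \<mu> B x" for x
    using \<open>\<mu> < \<mu>'\<close> unfolding cgamble_def by (auto simp: indicator_def)
  ultimately show ?thesis using coherent_D_mono[OF D _ gamble_cgamble[OF \<open>gamble f\<close>]] by blast
qed

lemma natext_lp_generators_subset:
  assumes D: "coherent_D D" and "C \<subseteq> Ccond" and P: "\<forall>(f, B)\<in>C. P f B = lowprev_D D f B"
  shows "{cgamble f \<mu> B | f \<mu> B. (f, B) \<in> C \<and> ereal \<mu> < P f B} \<subseteq> D"
proof clarify
  fix f \<mu> B assume "(f, B) \<in> C" "ereal \<mu> < P f B"
  moreover from this have "gamble f" using \<open>C \<subseteq> Ccond\<close> unfolding Ccond_def by auto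
  ultimately show "cgamble f \<mu> B \<in> D" using P cgamble_mem_if_less_lowprev_D[OF D] by auto
qed

lemma coherent_natext_lp:
  assumes "coherent_lp C P"
  shows "coherent_D (natext_lp C P)"
proof -
  obtain D where D: "coherent_D D" "C \<subseteq> Ccond" "\<forall>(f, B)\<in>C. P f B = lowprev_D D f B"
    using assms unfolding coherent_lp_def by blast
  show ?thesis
    unfolding natext_lp_def by (rule coherent_natext[OF D(1) natext_lp_generators_subset[OF D]])
qed

lemma lowprev_natext_lp:
  assumes "coherent_lp C P" and "(f, B) \<in> C"
  shows "lowprev_D (natext_lp C P) f B = P f B"
proof (rule antisym)
  obtain D where D: "coherent_D D" "C \<subseteq> Ccond" "\<forall>(f, B)\<in>C. P f B = lowprev_D D f B"
    using assms(1) unfolding coherent_lp_def by blast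
  have "natext_lp C P \<subseteq> D"
    unfolding natext_lp_def by (rule natext_least[OF D(1) natext_lp_generators_subset[OF D]])
  then have "lowprev_D (natext_lp C P) f B \<le> lowprev_D D f B" by (rule lowprev_D_mono)
  also have "\<dots> = P f B" using D(3) \<open>(f, B) \<in> C\<close> by auto
  finally show "lowprev_D (natext_lp C P) f B \<le> P f B" .
next
  show "P f B \<le> lowprev_D (natext_lp C P) f B"
  proof (rule dense_le)
    fix y assume y: "y < P f B"
    show "y \<le> lowprev_D (natext_lp C P) f B"
    proof (cases y)
      case (real \<mu>)
      with y \<open>(f, B) \<in> C\<close> have "cgamble f \<mu> B \<in> natext_lp C P"
        unfolding natext_lp_def natext_def by (intro posi_base) blast
      then show ?thesis unfolding lowprev_D_def real by (blast intro: Sup_upper)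
    qed (use y in simp_all)
  qed
qed

section \<open>A normal form for the gambles of the product\<close>

text \<open>Gambles on \<open>X1 \<times> X2\<close> in curried form that are a sum of terms \<open>g(x1) I_B(x2)\<close> with \<open>g \<in> D1\<close>,
  plus a term \<open>\<Phi>\<close> whose \<open>x1\<close>-sections lie in \<open>D2 \<union> {0}\<close>; the last conjunct excludes the zero
  gamble. Every element of \<open>prod_D\<close> has this form (\<open>prod_D_product_form\<close>).\<close>

definition product_form :: "('a \<Rightarrow> real) set \<Rightarrow> ('b \<Rightarrow> real) set \<Rightarrow> ('a \<Rightarrow> 'b \<Rightarrow> real) \<Rightarrow> bool" where
  "product_form D1 D2 h \<longleftrightarrow> (\<exists>L \<Phi>.
     (\<forall>x1 x2. h x1 x2 = \<Phi> x1 x2 + (\<Sum>(g, B)\<leftarrow>L. g x1 * indicator B x2)) \<and>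
     (\<forall>(g, B)\<in>set L. g \<in> D1 \<and> B \<noteq> {}) \<and>
     (\<forall>x1. \<Phi> x1 \<in> insert (\<lambda>_. 0) D2) \<and>
     (L \<noteq> [] \<or> (\<exists>x1. \<Phi> x1 \<in> D2)))"

lemma product_formI:
  assumes "\<And>x1 x2. h x1 x2 = \<Phi> x1 x2 + (\<Sum>(g, B)\<leftarrow>L. g x1 * indicator B x2)"
    and "\<And>g B. (g, B) \<in> set L \<Longrightarrow> g \<in> D1 \<and> B \<noteq> {}"
    and "\<And>x1. \<Phi> x1 \<in> insert (\<lambda>_. 0) D2"
    and "L \<noteq> [] \<or> (\<exists>x1. \<Phi> x1 \<in> D2)"
  shows "product_form D1 D2 h"
  unfolding product_form_def using assms by blast

lemma product_formE:
  assumes "product_form D1 D2 h"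
  obtains L \<Phi> where "\<And>x1 x2. h x1 x2 = \<Phi> x1 x2 + (\<Sum>(g, B)\<leftarrow>L. g x1 * indicator B x2)"
    and "\<And>g B. (g, B) \<in> set L \<Longrightarrow> g \<in> D1 \<and> B \<noteq> {}"
    and "\<And>x1. \<Phi> x1 \<in> insert (\<lambda>_. 0) D2"
    and "L \<noteq> [] \<or> (\<exists>x1. \<Phi> x1 \<in> D2)"
  using assms unfolding product_form_def by blast

lemma product_form_sections:
  "(\<And>x. h x \<in> insert (\<lambda>_. 0) D2) \<Longrightarrow> h y \<in> D2 \<Longrightarrow> product_form D1 D2 h"
  by (rule product_formI[of h h "[]"]) auto

lemma product_form_add:
  assumes D2: "coherent_D D2" and "product_form D1 D2 h" "product_form D1 D2 k"
  shows "product_form D1 D2 (\<lambda>x1 x2. h x1 x2 + k x1 x2)"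
proof -
  obtain L \<Phi> where h: "\<And>x1 x2. h x1 x2 = \<Phi> x1 x2 + (\<Sum>(g, B)\<leftarrow>L. g x1 * indicator B x2)"
    "\<And>g B. (g, B) \<in> set L \<Longrightarrow> g \<in> D1 \<and> B \<noteq> {}" "\<And>x1. \<Phi> x1 \<in> insert (\<lambda>_. 0) D2"
    "L \<noteq> [] \<or> (\<exists>x1. \<Phi> x1 \<in> D2)"
    using \<open>product_form D1 D2 h\<close> by (rule product_formE) blast
  obtain M \<Psi> where k: "\<And>x1 x2. k x1 x2 = \<Psi> x1 x2 + (\<Sum>(g, B)\<leftarrow>M. g x1 * indicator B x2)"
    "\<And>g B. (g, B) \<in> set M \<Longrightarrow> g \<in> D1 \<and> B \<noteq> {}" "\<And>x1. \<Psi> x1 \<in> insert (\<lambda>_. 0) D2"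
    using \<open>product_form D1 D2 k\<close> by (rule product_formE) blast
  show ?thesis
  proof (rule product_formI[where L = "L @ M" and \<Phi> = "\<lambda>x1 x2. \<Phi> x1 x2 + \<Psi> x1 x2"])
    show "\<And>x1. (\<lambda>x2. \<Phi> x1 x2 + \<Psi> x1 x2) \<in> insert (\<lambda>_. 0) D2"
      using h(3) k(3) by (rule coherent_D_insert_zero_add[OF D2])
    show "L @ M \<noteq> [] \<or> (\<exists>x1. (\<lambda>x2. \<Phi> x1 x2 + \<Psi> x1 x2) \<in> D2)"
      using h(4) k(3) coherent_D_add_insert_zero[OF D2] by auto
    show "\<And>g B. (g, B) \<in> set (L @ M) \<Longrightarrow> g \<in> D1 \<and> B \<noteq> {}"
      using h(2) k(2) by (metis Un_iff set_append)
  qed (simp add: h(1) k(1))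
qed

lemma product_form_scale:
  assumes D1: "coherent_D D1" and D2: "coherent_D D2" and "product_form D1 D2 h" "0 < c"
  shows "product_form D1 D2 (\<lambda>x1 x2. c * h x1 x2)"
proof -
  obtain L \<Phi> where h: "\<And>x1 x2. h x1 x2 = \<Phi> x1 x2 + (\<Sum>(g, B)\<leftarrow>L. g x1 * indicator B x2)"
    "\<And>g B. (g, B) \<in> set L \<Longrightarrow> g \<in> D1 \<and> B \<noteq> {}" "\<And>x1. \<Phi> x1 \<in> insert (\<lambda>_. 0) D2"
    "L \<noteq> [] \<or> (\<exists>x1. \<Phi> x1 \<in> D2)"
    using \<open>product_form D1 D2 h\<close> by (rule product_formE) blast
  let ?L = "map (\<lambda>(g, B). (\<lambda>x. c * g x, B)) L"
  show ?thesis
  proof (rule product_formI[where L = ?L and \<Phi> = "\<lambda>x1 x2. c * \<Phi> x1 x2"])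
    fix x1 x2
    have "(\<Sum>(g, B)\<leftarrow>?L. g x1 * indicator B x2) = c * (\<Sum>(g, B)\<leftarrow>L. g x1 * indicator B x2)"
      by (induction L) (auto simp: algebra_simps)
    then show "c * h x1 x2 = c * \<Phi> x1 x2 + (\<Sum>(g, B)\<leftarrow>?L. g x1 * indicator B x2)"
      by (simp add: h(1) distrib_left)
  next
    show "(\<lambda>x2. c * \<Phi> x1 x2) \<in> insert (\<lambda>_. 0) D2" for x1
      using h(3) \<open>0 < c\<close> by (rule coherent_D_insert_zero_scale[OF D2])
    show "?L \<noteq> [] \<or> (\<exists>x1. (\<lambda>x2. c * \<Phi> x1 x2) \<in> D2)"
      using h(4) \<open>0 < c\<close> coherent_D_scale[OF D2] by auto
  qed (use h(2) \<open>0 < c\<close> coherent_D_scale[OF D1] in auto)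
qed

lemma sum_list_conv_sum_nth: "(\<Sum>(g, B)\<leftarrow>L. F g B) = (\<Sum>j<length L. F (fst (L ! j)) (snd (L ! j)))"
  by (simp add: sum_list_sum_nth atLeast0LessThan case_prod_beta)

lemma product_form_not_nonpos:
  assumes D1: "coherent_D D1" and D2: "coherent_D D2"
    and "product_form D1 D2 h" and nonpos: "\<And>x1 x2. h x1 x2 \<le> 0"
  shows False
proof -
  obtain L \<Phi> where h: "\<And>x1 x2. h x1 x2 = \<Phi> x1 x2 + (\<Sum>(g, B)\<leftarrow>L. g x1 * indicator B x2)"
    "\<And>g B. (g, B) \<in> set L \<Longrightarrow> g \<in> D1 \<and> B \<noteq> {}" "\<And>x1. \<Phi> x1 \<in> insert (\<lambda>_. 0) D2"
    "L \<noteq> [] \<or> (\<exists>x1. \<Phi> x1 \<in> D2)"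
    using \<open>product_form D1 D2 h\<close> by (rule product_formE) blast
  let ?n = "length L"
  have L_nth: "fst (L ! j) \<in> D1" "snd (L ! j) \<noteq> {}" if "j < ?n" for j
    using h(2)[of "fst (L ! j)" "snd (L ! j)"] nth_mem[OF that] by auto
  show False
  proof (cases "L = []")
    case True
    then obtain x1 where "\<Phi> x1 \<in> D2" using h(4) by blast
    moreover have "\<Phi> x1 x2 \<le> 0" for x2 using nonpos[of x1 x2] h(1) True by simp
    ultimately show False by (rule coherent_D_nonpos[OF D2])
  next
    case False
    then obtain \<alpha> where \<alpha>: "\<forall>i\<in>{..<?n}. 0 \<le> \<alpha> i" "\<exists>i\<in>{..<?n}. 0 < \<alpha> i"
      "\<forall>v. (\<lambda>x. - (\<Sum>j<?n. v j * indicator (snd (L ! j)) x)) \<in> insert (\<lambda>_. 0) D2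
         \<longrightarrow> (\<Sum>i<?n. \<alpha> i * v i) \<le> 0"
      using indicator_weights_exist[OF D2, of "{..<?n}" "\<lambda>j. snd (L ! j)"] L_nth(2) by auto
    have "(\<Sum>i<?n. \<alpha> i * fst (L ! i) x1) \<le> 0" for x1
    proof -
      have "(\<lambda>x2. - (\<Sum>j<?n. fst (L ! j) x1 * indicator (snd (L ! j)) x2)) \<in> insert (\<lambda>_. 0) D2"
        using h(3) gamble_indicator_combination
      proof (rule coherent_D_insert_zero_mono[OF D2])
        show "\<Phi> x1 x2 \<le> - (\<Sum>j<?n. fst (L ! j) x1 * indicator (snd (L ! j)) x2)" for x2
          using nonpos[of x1 x2] by (simp add: h(1) sum_list_conv_sum_nth)
      qed simp
      then show ?thesis using \<alpha>(3)[rule_format, of "\<lambda>j. fst (L ! j) x1"] by simp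
    qed
    moreover have "(\<lambda>x1. \<Sum>i\<in>{..<?n}. \<alpha> i * fst (L ! i) x1) \<in> D1"
      using \<alpha>(1,2) L_nth(1) by (intro coherent_D_sum[OF D1]) auto
    ultimately show False by (rule coherent_D_nonpos[OF D1, rotated])
  qed
qed

lemma dominated_decomposition_weights:
  assumes D2: "coherent_D D2"
    and h: "\<And>x1 x2. h x1 x2 = \<Phi> x1 x2 + (\<Sum>(g, B)\<leftarrow>L. g x1 * indicator B x2)"
    and L: "\<And>g B. (g, B) \<in> set L \<Longrightarrow> B \<noteq> {}"
    and \<Phi>: "\<And>x1. \<Phi> x1 \<in> insert (\<lambda>_. 0) D2"
    and le: "\<And>x1 x2. h x1 x2 \<le> f x1 * indicator B x2" and "B \<noteq> {}"
  shows "\<exists>\<alpha>. (\<forall>i\<le>length L. 0 \<le> \<alpha> i) \<and> (\<exists>i\<le>length L. 0 < \<alpha> i) \<and>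
           (\<forall>x1. (\<Sum>i<length L. \<alpha> i * fst (L ! i) x1) \<le> \<alpha> (length L) * f x1)"
proof -
  let ?n = "length L"
  define C where "C j = (if j < ?n then snd (L ! j) else B)" for j
  have "C j \<noteq> {}" for j
    using L[of "fst (L ! j)" "snd (L ! j)"] nth_mem[of j L] \<open>B \<noteq> {}\<close> by (auto simp: C_def)
  then obtain \<alpha> where \<alpha>: "\<forall>i\<in>{..<Suc ?n}. 0 \<le> \<alpha> i" "\<exists>i\<in>{..<Suc ?n}. 0 < \<alpha> i"
    "\<forall>v. (\<lambda>x. - (\<Sum>j<Suc ?n. v j * indicator (C j) x)) \<in> insert (\<lambda>_. 0) D2
       \<longrightarrow> (\<Sum>i<Suc ?n. \<alpha> i * v i) \<le> 0"
    using indicator_weights_exist[OF D2, of "{..<Suc ?n}" C] by auto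
  have "(\<Sum>i<?n. \<alpha> i * fst (L ! i) x1) \<le> \<alpha> ?n * f x1" for x1
  proof -
    define v where "v j = (if j < ?n then fst (L ! j) x1 else - f x1)" for j
    have sum_v: "(\<Sum>j<Suc ?n. v j * indicator (C j) x2)
        = (\<Sum>(g, B)\<leftarrow>L. g x1 * indicator B x2) - f x1 * indicator B x2" for x2
    proof -
      have "(\<Sum>j<?n. v j * indicator (C j) x2)
          = (\<Sum>j<?n. fst (L ! j) x1 * indicator (snd (L ! j)) x2)"
        by (intro sum.cong) (simp_all add: v_def C_def)
      then show ?thesis by (simp add: sum_list_conv_sum_nth v_def C_def)
    qed
    have "(\<lambda>x2. - (\<Sum>j<Suc ?n. v j * indicator (C j) x2)) \<in> insert (\<lambda>_. 0) D2"
      using \<Phi> gamble_indicator_combination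
    proof (rule coherent_D_insert_zero_mono[OF D2])
      show "\<Phi> x1 x2 \<le> - (\<Sum>j<Suc ?n. v j * indicator (C j) x2)" for x2
        using le[of x1 x2] unfolding sum_v h by simp
    qed simp
    then have "(\<Sum>i<Suc ?n. \<alpha> i * v i) \<le> 0" using \<alpha>(3) by blast
    moreover have "(\<Sum>i<?n. \<alpha> i * v i) = (\<Sum>i<?n. \<alpha> i * fst (L ! i) x1)"
      by (intro sum.cong) (simp_all add: v_def)
    ultimately show ?thesis by (simp add: v_def)
  qed
  then show ?thesis using \<alpha>(1,2) by (intro exI[of _ \<alpha>]) (auto simp: less_Suc_eq_le)
qed

lemma product_form_dominated:
  assumes D1: "coherent_D D1" and D2: "coherent_D D2" and "product_form D1 D2 h"
    and le: "\<And>x1 x2. h x1 x2 \<le> f x1 * indicator B x2" and "B \<noteq> {}" and "gamble f"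
  shows "f \<in> insert (\<lambda>_. 0) D1"
proof -
  obtain L \<Phi> where h: "\<And>x1 x2. h x1 x2 = \<Phi> x1 x2 + (\<Sum>(g, B)\<leftarrow>L. g x1 * indicator B x2)"
    "\<And>g B. (g, B) \<in> set L \<Longrightarrow> g \<in> D1 \<and> B \<noteq> {}" "\<And>x1. \<Phi> x1 \<in> insert (\<lambda>_. 0) D2"
    using \<open>product_form D1 D2 h\<close> by (rule product_formE) blast
  let ?n = "length L"
  obtain \<alpha> where \<alpha>: "\<forall>i\<le>?n. 0 \<le> \<alpha> i" "\<exists>i\<le>?n. 0 < \<alpha> i"
    "\<And>x1. (\<Sum>i<?n. \<alpha> i * fst (L ! i) x1) \<le> \<alpha> ?n * f x1"
    using dominated_decomposition_weights[OF D2 h(1) _ h(3) le \<open>B \<noteq> {}\<close>] h(2) by blast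
  show ?thesis
  proof (cases "\<exists>i<?n. 0 < \<alpha> i")
    case True
    have "fst (L ! i) \<in> D1" if "i < ?n" for i
      using h(2)[of "fst (L ! i)" "snd (L ! i)"] nth_mem[OF that] by simp
    then have S: "(\<lambda>x1. \<Sum>i\<in>{..<?n}. \<alpha> i * fst (L ! i) x1) \<in> D1"
      using \<alpha>(1) True by (intro coherent_D_sum[OF D1]) auto
    have "0 < \<alpha> ?n"
    proof (rule ccontr)
      assume "\<not> 0 < \<alpha> ?n"
      with \<alpha>(1) have "\<alpha> ?n = 0" by force
      with \<alpha>(3) show False using coherent_D_nonpos[OF D1 S] by simp
    qed
    then have scaled: "(\<lambda>x1. (1 / \<alpha> ?n) * (\<Sum>i<?n. \<alpha> i * fst (L ! i) x1)) \<in> D1"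
      by (intro coherent_D_scale[OF D1 S]) simp
    have "(1 / \<alpha> ?n) * (\<Sum>i<?n. \<alpha> i * fst (L ! i) x1) \<le> f x1" for x1
      using \<alpha>(3)[of x1] \<open>0 < \<alpha> ?n\<close> by (simp add: field_simps)
    from coherent_D_mono[OF D1 scaled \<open>gamble f\<close> this] show ?thesis by simp
  next
    case False
    have zero: "\<alpha> i = 0" if "i < ?n" for i
    proof -
      have "0 \<le> \<alpha> i" "\<not> 0 < \<alpha> i" using \<alpha>(1) False that by auto
      then show ?thesis by simp
    qed
    obtain i where "i \<le> ?n" "0 < \<alpha> i" using \<alpha>(2) by blast
    with zero have "0 < \<alpha> ?n" by (cases "i = ?n") auto
    moreover have "0 \<le> \<alpha> ?n * f x1" for x1 using \<alpha>(3)[of x1] zero by simp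
    ultimately have "0 \<le> f x1" for x1 by (simp add: zero_le_mult_iff)
    then show ?thesis using coherent_D_insert_zero_mono[OF D1 _ \<open>gamble f\<close>, of "\<lambda>_. 0"] by simp
  qed
qed

section \<open>The independent product\<close>

lemma cyl1_indicator_mem_prod_D:
  "f \<in> D1 \<Longrightarrow> B2 \<in> Bs2 \<union> {UNIV} \<Longrightarrow>
    (\<lambda>x. cyl1 f x * indicator (cylset2 B2) x) \<in> prod_D Bs1 Bs2 D1 D2"
  unfolding prod_D_def natext_def by (intro posi_base) blast

lemma prod_D_induct [consumes 1, case_names cyl2 cyl1 pos scale add]:
  assumes "h \<in> prod_D Bs1 Bs2 D1 D2"
    and cyl2: "\<And>f2 B1. f2 \<in> D2 \<Longrightarrow> B1 \<in> Bs1 \<union> {UNIV} \<Longrightarrow> Q (\<lambda>x. cyl2 f2 x * indicator (cylset1 B1) x)"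
    and cyl1: "\<And>f1 B2. f1 \<in> D1 \<Longrightarrow> B2 \<in> Bs2 \<union> {UNIV} \<Longrightarrow> Q (\<lambda>x. cyl1 f1 x * indicator (cylset2 B2) x)"
    and pos: "\<And>f. f \<in> gambles_pos \<Longrightarrow> Q f"
    and scale: "\<And>f c. Q f \<Longrightarrow> 0 < c \<Longrightarrow> Q (\<lambda>x. c * f x)"
    and add: "\<And>f g. Q f \<Longrightarrow> Q g \<Longrightarrow> Q (\<lambda>x. f x + g x)"
  shows "Q h"
  using assms(1) unfolding prod_D_def natext_def
proof (induction rule: posi_induct)
  case (base f)
  then show ?case using cyl2 cyl1 pos by blast
qed (fact scale add)+

lemma prod_D_swap:
  assumes "h \<in> prod_D Bs1 Bs2 D1 D2"
  shows "h \<circ> prod.swap \<in> prod_D Bs2 Bs1 D2 D1"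
  using assms
proof (induction rule: prod_D_induct)
  case (cyl2 f2 B1)
  have "(\<lambda>x. cyl2 f2 x * indicator (cylset1 B1) x) \<circ> prod.swap
      = (\<lambda>x. cyl1 f2 x * indicator (cylset2 B1) x)"
    by (auto simp: fun_eq_iff cyl1_def cyl2_def cylset1_def cylset2_def indicator_def)
  with cyl2 show ?case unfolding prod_D_def natext_def by (intro posi_base) blast
next
  case (cyl1 f1 B2)
  have "(\<lambda>x. cyl1 f1 x * indicator (cylset2 B2) x) \<circ> prod.swap
      = (\<lambda>x. cyl2 f1 x * indicator (cylset1 B2) x)"
    by (auto simp: fun_eq_iff cyl1_def cyl2_def cylset1_def cylset2_def indicator_def)
  with cyl1 show ?case unfolding prod_D_def natext_def by (intro posi_base) blast
next
  case (pos f)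
  then obtain x where "f x \<noteq> 0" unfolding gambles_pos_def by (auto simp: fun_eq_iff)
  then have "(f \<circ> prod.swap) (prod.swap x) \<noteq> 0" by simp
  then have "f \<circ> prod.swap \<noteq> (\<lambda>_. 0)" by force
  moreover have "gamble (f \<circ> prod.swap)"
    using pos unfolding gambles_pos_def gamble_def o_def by blast
  ultimately have "f \<circ> prod.swap \<in> gambles_pos" using pos unfolding gambles_pos_def by simp
  then show ?case unfolding prod_D_def natext_def by (intro posi_base) blast
next
  case (scale f c)
  then show ?case unfolding prod_D_def natext_def by (simp add: o_def posi_scale)
next
  case (add f g)
  then show ?case unfolding prod_D_def natext_def by (simp add: o_def posi_add)
qed

lemma prod_D_swap_iff: "h \<circ> prod.swap \<in> prod_D Bs2 Bs1 D2 D1 \<longleftrightarrow> h \<in> prod_D Bs1 Bs2 D1 D2"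
  using prod_D_swap[of "h \<circ> prod.swap" Bs2 Bs1 D2 D1] prod_D_swap[of h Bs1 Bs2 D1 D2]
  by (auto simp: comp_assoc)

lemma prod_D_product_form:
  assumes D1: "coherent_D D1" and D2: "coherent_D D2" and "{} \<notin> Bs1" "{} \<notin> Bs2"
    and "h \<in> prod_D Bs1 Bs2 D1 D2"
  shows "product_form D1 D2 (\<lambda>x1 x2. h (x1, x2))"
  using assms(5)
proof (induction rule: prod_D_induct)
  case (cyl2 f2 B1)
  then have "B1 \<noteq> {}" using \<open>{} \<notin> Bs1\<close> by auto
  then obtain y1 where "y1 \<in> B1" by blast
  have "(\<lambda>x2. cyl2 f2 (x1, x2) * indicator (cylset1 B1) (x1, x2))
      = (if x1 \<in> B1 then f2 else (\<lambda>_. 0))" for x1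
    by (auto simp: fun_eq_iff cyl2_def cylset1_def)
  with cyl2 \<open>y1 \<in> B1\<close> show ?case by (intro product_form_sections[where y = y1]) auto
next
  case (cyl1 f1 B2)
  then have "B2 \<noteq> {}" using \<open>{} \<notin> Bs2\<close> by auto
  show ?case
    by (rule product_formI[where \<Phi> = "\<lambda>_ _. 0" and L = "[(f1, B2)]"])
      (use cyl1 \<open>B2 \<noteq> {}\<close> in \<open>simp_all add: cyl1_def cylset2_def indicator_def\<close>)
next
  case (pos f)
  then have f: "gamble f" "\<And>x. 0 \<le> f x" "f \<noteq> (\<lambda>_. 0)" unfolding gambles_pos_def by auto
  then obtain y1 y2 where "f (y1, y2) \<noteq> 0" by (auto simp: fun_eq_iff)
  have "(\<lambda>x2. f (x1, x2)) \<in> insert (\<lambda>_. 0) D2" for x1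
    using f(2) coherent_D_pos[OF D2 gamble_section[OF f(1)]] by auto
  moreover have "(\<lambda>x2. f (y1, x2)) \<in> D2"
    using f(2) \<open>f (y1, y2) \<noteq> 0\<close>
    by (intro coherent_D_pos[OF D2 gamble_section[OF f(1)]]) (auto simp: fun_eq_iff)
  ultimately show ?case by (rule product_form_sections)
next
  case (scale f c)
  then show ?case using product_form_scale[OF D1 D2] by blast
next
  case (add f g)
  then show ?case using product_form_add[OF D2] by blast
qed

lemma coherent_prod_D:
  assumes D1: "coherent_D D1" and D2: "coherent_D D2" and "{} \<notin> Bs1" "{} \<notin> Bs2"
  shows "coherent_D (prod_D Bs1 Bs2 D1 D2)"
proof -
  have "gamble h" if "h \<in> prod_D Bs1 Bs2 D1 D2" for h
    using that
  proof (induction rule: prod_D_induct)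
    case (cyl2 f2 B1)
    then show ?case by (intro gamble_mult_indicator gamble_cyl2 coherent_D_gamble[OF D2])
  next
    case (cyl1 f1 B2)
    then show ?case by (intro gamble_mult_indicator gamble_cyl1 coherent_D_gamble[OF D1])
  qed (simp_all add: gambles_pos_def gamble_scale gamble_add)
  moreover have False if "h \<in> prod_D Bs1 Bs2 D1 D2" "\<And>x. h x \<le> 0" for h
    using product_form_not_nonpos[OF D1 D2 prod_D_product_form[OF assms that(1)]] that(2) by simp
  ultimately show ?thesis
    unfolding prod_D_def by (intro coherent_natextI) (auto simp: gambles_def prod_D_def)
qed

lemma prod_D_cyl1_iff:
  assumes D1: "coherent_D D1" and D2: "coherent_D D2" and "{} \<notin> Bs1" "{} \<notin> Bs2"
    and "gamble f" and B2: "B2 \<in> Bs2 \<union> {UNIV}"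
  shows "(\<lambda>x. cyl1 f x * indicator (cylset2 B2) x) \<in> prod_D Bs1 Bs2 D1 D2 \<longleftrightarrow> f \<in> D1"
proof
  let ?h = "\<lambda>x. cyl1 f x * indicator (cylset2 B2) x"
  assume h: "?h \<in> prod_D Bs1 Bs2 D1 D2"
  have "B2 \<noteq> {}" using B2 \<open>{} \<notin> Bs2\<close> by auto
  with h have "f \<in> insert (\<lambda>_. 0) D1"
    by (intro product_form_dominated[OF D1 D2 prod_D_product_form[OF assms(1-4) h] _ _ \<open>gamble f\<close>])
      (simp_all add: cyl1_def cylset2_def indicator_def)
  moreover have "f \<noteq> (\<lambda>_. 0)"
  proof
    assume "f = (\<lambda>_. 0)"
    then have "?h x \<le> 0" for x by (simp add: cyl1_def)
    with h show False by (rule coherent_D_nonpos[OF coherent_prod_D[OF assms(1-4)]])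
  qed
  ultimately show "f \<in> D1" by simp
next
  assume "f \<in> D1"
  then show "(\<lambda>x. cyl1 f x * indicator (cylset2 B2) x) \<in> prod_D Bs1 Bs2 D1 D2"
    using B2 by (rule cyl1_indicator_mem_prod_D)
qed

lemma prod_D_cyl2_iff:
  assumes "coherent_D D1" "coherent_D D2" "{} \<notin> Bs1" "{} \<notin> Bs2"
    and "gamble f" and "B1 \<in> Bs1 \<union> {UNIV}"
  shows "(\<lambda>x. cyl2 f x * indicator (cylset1 B1) x) \<in> prod_D Bs1 Bs2 D1 D2 \<longleftrightarrow> f \<in> D2"
proof -
  have "(\<lambda>x. cyl2 f x * indicator (cylset1 B1) x) \<circ> prod.swap
      = (\<lambda>x. cyl1 f x * indicator (cylset2 B1) x)"
    by (auto simp: fun_eq_iff cyl1_def cyl2_def cylset1_def cylset2_def indicator_def)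
  then show ?thesis
    using prod_D_swap_iff[of "\<lambda>x. cyl2 f x * indicator (cylset1 B1) x" Bs2 Bs1 D2 D1]
      prod_D_cyl1_iff[OF assms(2,1,4,3,5,6)] by simp
qed

lemma lowprev_prod_D_cyl1:
  assumes "coherent_D D1" "coherent_D D2" "{} \<notin> Bs1" "{} \<notin> Bs2"
    and "gamble f" and "B2 \<in> Bs2 \<union> {UNIV}"
  shows "lowprev_D (prod_D Bs1 Bs2 D1 D2) (cyl1 f) (cylset1 B1 \<inter> cylset2 B2) = lowprev_D D1 f B1"
proof -
  have "cgamble (cyl1 f) \<mu> (cylset1 B1 \<inter> cylset2 B2)
      = (\<lambda>x. cyl1 (cgamble f \<mu> B1) x * indicator (cylset2 B2) x)" for \<mu>
    by (auto simp: fun_eq_iff cgamble_def cyl1_def cylset1_def cylset2_def indicator_def)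
  then show ?thesis
    unfolding lowprev_D_def
    using prod_D_cyl1_iff[OF assms(1-4) gamble_cgamble[OF \<open>gamble f\<close>] assms(6)] by simp
qed

lemma lowprev_prod_D_cyl2:
  assumes "coherent_D D1" "coherent_D D2" "{} \<notin> Bs1" "{} \<notin> Bs2"
    and "gamble f" and "B1 \<in> Bs1 \<union> {UNIV}"
  shows "lowprev_D (prod_D Bs1 Bs2 D1 D2) (cyl2 f) (cylset2 B2 \<inter> cylset1 B1) = lowprev_D D2 f B2"
proof -
  have "cgamble (cyl2 f) \<mu> (cylset2 B2 \<inter> cylset1 B1)
      = (\<lambda>x. cyl2 (cgamble f \<mu> B2) x * indicator (cylset1 B1) x)" for \<mu>
    by (auto simp: fun_eq_iff cgamble_def cyl2_def cylset1_def cylset2_def indicator_def)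
  then show ?thesis
    unfolding lowprev_D_def
    using prod_D_cyl2_iff[OF assms(1-4) gamble_cgamble[OF \<open>gamble f\<close>] assms(6)] by simp
qed

theorem proposition44:
  fixes Bs1 :: "'a set set" and Bs2 :: "'b set set"
    and C1 :: "(('a \<Rightarrow> real) \<times> 'a set) set" and P1 :: "'a clp"
    and C2 :: "(('b \<Rightarrow> real) \<times> 'b set) set" and P2 :: "'b clp"
    and C :: "((('a \<times> 'b) \<Rightarrow> real) \<times> ('a \<times> 'b) set) set"
  assumes "{} \<notin> Bs1" and "{} \<notin> Bs2"
    and "coherent_lp C1 P1" and "coherent_lp C2 P2"
    and "C \<subseteq> Ccond"
    and "independent_domain Bs1 Bs2 C"
    and "\<forall>(f, B)\<in>C1. (cyl1 f, cylset1 B) \<in> C"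
    and "\<forall>(f, B)\<in>C2. (cyl2 f, cylset2 B) \<in> C"
  shows "independent_product Bs1 Bs2 C1 P1 C2 P2 C (prod_lp Bs1 Bs2 C1 P1 C2 P2)"
proof -
  let ?D = "prod_D Bs1 Bs2 (natext_lp C1 P1) (natext_lp C2 P2)"
  note D1 = coherent_natext_lp[OF assms(3)] and D2 = coherent_natext_lp[OF assms(4)]
  have P: "prod_lp Bs1 Bs2 C1 P1 C2 P2 = lowprev_D ?D" unfolding prod_lp_def ..
  have UNIV: "UNIV \<in> Bs1 \<union> {UNIV}" "UNIV \<in> Bs2 \<union> {UNIV}" by simp_all
  note marg1 = lowprev_prod_D_cyl1[OF D1 D2 assms(1,2)]
    and marg2 = lowprev_prod_D_cyl2[OF D1 D2 assms(1,2)]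
  have "C1 \<subseteq> Ccond" "C2 \<subseteq> Ccond" using assms(3,4) unfolding coherent_lp_def by blast+
  then show ?thesis
    unfolding independent_product_def epistemically_independent_def P
    using assms(5,6) coherent_prod_D[OF D1 D2 assms(1,2)]
      marg1 marg1[OF _ UNIV(2)] marg2 marg2[OF _ UNIV(1)]
      lowprev_natext_lp[OF assms(3)] lowprev_natext_lp[OF assms(4)]
    by (auto simp: coherent_lp_def Ccond_def cylset1_def cylset2_def)
qed

end
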